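(* Let $(V_1,\dots,V_n)$ be an $n$-tuple of doubly non-commuting isometries on $H$, let $A=\{i_1,\dots,i_l\}\subseteq\{1,\dots,n\}$ be non-empty with $A^c=\{j_1,\dots,j_{n-l}\}$. Suppose $L$ is a subspace of $H_A$ invariant under $V_{j_1},\dots,V_{j_{n-l}}$ such that $H_A=\bigoplus_{k_{i_1},\dots,k_{i_l}\ge0}V_{i_1}^{k_{i_1}}\cdots V_{i_l}^{k_{i_l}}(L)$ as an orthogonal Hilbert direct sum. Then $L=W_A$.
   Context: Fix $n\ge1$ and $z_{ij}\in\mathbb T$ ($i\ne j$) with $z_{ji}=\overline{z_{ij}}$; $(V_1,\dots,V_n)$ is doubly non-commuting if the $V_i$ are isometries with $V_i^*V_j=\overline{z_{ij}}V_jV_i^*$ for $i\ne j$. For an isometry $S$: $H^{\mathrm{iso}}(S)=\bigoplus_{k\ge0}S^k(\ker S^* )$, $H^{\mathrm{uni}}(S)=\bigcap_{k\ge0}S^k(H)$. $H_A=\bigcap_{i\in A}H^{\mathrm{iso}}(V_i)\cap\bigcap_{i\in A^c}H^{\mathrm{uni}}(V_i)$ (intersection over empty index set $=H$). $W_A=\bigcap_{m_{j_1},\dots,m_{j_{n-l}}\ge0}V_{j_1}^{m_{j_1}}\cdots V_{j_{n-l}}^{m_{j_{n-l}}}\big(\bigcap_{i\in A}\ker V_i^*\big)$ (for $A=\{1,\dots,n\}$, $W_A=\bigcap_i\ker V_i^*$). Subspaces are closed. *)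

theory Defs
  imports "HOL-Analysis.Analysis"
begin

class complex_inner = real_normed_vector +
  fixes scaleC :: "complex \<Rightarrow> 'a \<Rightarrow> 'a"
    and cinner :: "'a \<Rightarrow> 'a \<Rightarrow> complex"
  assumes scaleC_of_real: "scaleC (complex_of_real r) x = scaleR r x"
    and scaleC_add_right: "scaleC a (x + y) = scaleC a x + scaleC a y"
    and scaleC_add_left: "scaleC (a + b) x = scaleC a x + scaleC b x"
    and scaleC_scaleC: "scaleC a (scaleC b x) = scaleC (a * b) x"
    and scaleC_one: "scaleC 1 x = x"
    and cinner_add_left: "cinner (x + y) z = cinner x z + cinner y z"
    and cinner_scaleC_left: "cinner (scaleC a x) y = cnj a * cinner x y"
    and cinner_commute: "cinner x y = cnj (cinner y x)"
    and cinner_norm: "cinner x x = complex_of_real ((norm x)\<^sup>2)"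

text \<open>A complex Hilbert space is then a type of class {complex_inner, complete_space}.\<close>

definition clinear :: "('a::complex_inner \<Rightarrow> 'b::complex_inner) \<Rightarrow> bool" where
  "clinear f \<longleftrightarrow> (\<forall>x y. f (x + y) = f x + f y) \<and> (\<forall>c x. f (scaleC c x) = scaleC c (f x))"

definition csubspace :: "'a::complex_inner set \<Rightarrow> bool" where
  "csubspace L \<longleftrightarrow> 0 \<in> L \<and> (\<forall>x\<in>L. \<forall>y\<in>L. x + y \<in> L) \<and> (\<forall>c. \<forall>x\<in>L. scaleC c x \<in> L) \<and> closed L"

definition cspan :: "'a::complex_inner set \<Rightarrow> 'a set" where
  "cspan X = {x. \<exists>F c. finite F \<and> F \<subseteq> X \<and> x = (\<Sum>v\<in>F. scaleC (c v) v)}"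

definition ccspan :: "'a::complex_inner set \<Rightarrow> 'a set" where
  "ccspan X = closure (cspan X)"

definition orth_sets :: "'a::complex_inner set \<Rightarrow> 'a set \<Rightarrow> bool" where
  "orth_sets X Y \<longleftrightarrow> (\<forall>x\<in>X. \<forall>y\<in>Y. cinner x y = 0)"

definition adj :: "('a::complex_inner \<Rightarrow> 'a) \<Rightarrow> ('a \<Rightarrow> 'a)" where
  "adj T = (THE S. \<forall>x y. cinner (T x) y = cinner x (S y))"

definition isometry :: "('a::complex_inner \<Rightarrow> 'a) \<Rightarrow> bool" where
  "isometry V \<longleftrightarrow> clinear V \<and> (\<forall>x. norm (V x) = norm x)"

definition kernel :: "('a::complex_inner \<Rightarrow> 'a) \<Rightarrow> 'a set" where
  "kernel T = {x. T x = 0}"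

definition doubly_noncommuting ::
  "nat \<Rightarrow> (nat \<Rightarrow> nat \<Rightarrow> complex) \<Rightarrow> (nat \<Rightarrow> 'a::complex_inner \<Rightarrow> 'a) \<Rightarrow> bool" where
  "doubly_noncommuting n z V \<longleftrightarrow>
     (\<forall>i\<in>{1..n}. isometry (V i)) \<and>
     (\<forall>i\<in>{1..n}. \<forall>j\<in>{1..n}. i \<noteq> j \<longrightarrow>
        (\<forall>x. adj (V i) (V j x) = scaleC (cnj (z i j)) (V j (adj (V i) x))))"

text \<open>Wold components of an isometry.\<close>
definition H_iso :: "('a::complex_inner \<Rightarrow> 'a) \<Rightarrow> 'a set" where
  "H_iso S = ccspan (\<Union>k. (S ^^ k) ` kernel (adj S))"

definition H_uni :: "('a::complex_inner \<Rightarrow> 'a) \<Rightarrow> 'a set" where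
  "H_uni S = (\<Inter>k. range (S ^^ k))"

definition H_A :: "nat \<Rightarrow> (nat \<Rightarrow> 'a::complex_inner \<Rightarrow> 'a) \<Rightarrow> nat set \<Rightarrow> 'a set" where
  "H_A n V A = (\<Inter>i\<in>A. H_iso (V i)) \<inter> (\<Inter>i\<in>{1..n} - A. H_uni (V i))"

definition prod_pow :: "(nat \<Rightarrow> 'a \<Rightarrow> 'a) \<Rightarrow> (nat \<Rightarrow> nat) \<Rightarrow> nat set \<Rightarrow> 'a \<Rightarrow> 'a" where
  "prod_pow V m J = foldr (\<lambda>j acc. (V j ^^ m j) \<circ> acc) (sorted_list_of_set J) id"

definition W_A :: "nat \<Rightarrow> (nat \<Rightarrow> 'a::complex_inner \<Rightarrow> 'a) \<Rightarrow> nat set \<Rightarrow> 'a set" where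
  "W_A n V A = (\<Inter>m\<in>({1..n} - A) \<rightarrow>\<^sub>E (UNIV::nat set).
       prod_pow V m ({1..n} - A) ` (\<Inter>i\<in>A. kernel (adj (V i))))"

end

theory Submission
  imports Defs
begin

(* Write Q k for the ordered product of the powers V i ^^ k i, i in A. Since the pieces Q k ` L
   are mutually orthogonal and span H_A, a vector of H_A orthogonal to every piece with k /= 0
   lies in L. The twisted commutation relations V i (V j x) = z i j V j (V i x) give, for i in A,
   V i (Q k x) = d Q (k + e_i) x with d /= 0, and, for j outside A, V j (Q k x) = d Q k (V j x).
   The first relation shows that the adjoint of V i maps L into H_A and orthogonally to H_A, so
   L lies in its kernel; the second shows that the adjoint of V j maps L into L, and since
   L <= H_uni (V j) lies in the range of V j, we get L <= V j ` L. Hence L <= W_A. Conversely, a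
   vector of W_A lies in H_A and in the kernels of the adjoints of V i, i in A, so pulling a
   factor V i out of Q k shows that it is orthogonal to every piece with k /= 0; hence it lies
   in L. *)

lemma scaleC_zero_left [simp]: "scaleC 0 (x::'a::complex_inner) = 0"
  using scaleC_of_real[of 0 x] by simp

lemma scaleC_zero_right [simp]: "scaleC c (0::'a::complex_inner) = 0"
  using scaleC_add_right[of c "0::'a" 0] by simp

lemma scaleC_minus_one: "scaleC (-1) (x::'a::complex_inner) = - x"
  using scaleC_of_real[of "-1" x] by simp

lemma scaleC_sum: "scaleC a (sum f F) = (\<Sum>v\<in>F. scaleC a (f v :: 'a::complex_inner))"
  by (induction F rule: infinite_finite_induct) (auto simp: scaleC_add_right)

lemma cinner_zero_left [simp]: "cinner 0 (y::'a::complex_inner) = 0"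
  using cinner_add_left[of "0::'a" 0 y] by simp

lemma cinner_minus_left: "cinner (- x) (y::'a::complex_inner) = - cinner x y"
  using cinner_add_left[of x "-x" y] by (simp add: eq_neg_iff_add_eq_0 add.commute)

lemma cinner_diff_left: "cinner (x - z) (y::'a::complex_inner) = cinner x y - cinner z y"
  using cinner_add_left[of x "-z" y] by (simp add: cinner_minus_left)

lemma cinner_add_right: "cinner x (y + z::'a::complex_inner) = cinner x y + cinner x z"
  by (metis cinner_add_left cinner_commute complex_cnj_add)

lemma cinner_zero_right [simp]: "cinner x (0::'a::complex_inner) = 0"
  by (metis cinner_commute cinner_zero_left complex_cnj_zero)

lemma cinner_minus_right: "cinner x (- y::'a::complex_inner) = - cinner x y"
  by (metis cinner_commute cinner_minus_left complex_cnj_minus)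

lemma cinner_diff_right: "cinner x (y - z::'a::complex_inner) = cinner x y - cinner x z"
  by (metis cinner_commute cinner_diff_left complex_cnj_diff)

lemma cinner_scaleC_right: "cinner x (scaleC a y::'a::complex_inner) = a * cinner x y"
  by (metis cinner_commute cinner_scaleC_left complex_cnj_cnj complex_cnj_mult)

lemma cinner_sum_right: "cinner x (sum f F) = (\<Sum>v\<in>F. cinner x (f v :: 'a::complex_inner))"
  by (induction F rule: infinite_finite_induct) (auto simp: cinner_add_right)

lemma cinner_eq_zero_sym: "cinner x (y::'a::complex_inner) = 0 \<longleftrightarrow> cinner y x = 0"
  by (metis cinner_commute complex_cnj_zero_iff)

lemma Re_cinner_self: "Re (cinner x (x::'a::complex_inner)) = (norm x)\<^sup>2"
  by (simp add: cinner_norm)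

lemma cinner_self_eq_zero_iff: "cinner x (x::'a::complex_inner) = 0 \<longleftrightarrow> x = 0"
  by (simp add: cinner_norm)

lemma cinner_ext: "(\<And>x. cinner x u = cinner x (v::'a::complex_inner)) \<Longrightarrow> u = v"
  by (metis cinner_diff_right cinner_self_eq_zero_iff right_minus_eq)

lemma cinner_ext_left: "(\<And>u. cinner a u = cinner b (u::'a::complex_inner)) \<Longrightarrow> a = b"
  by (rule cinner_ext) (metis cinner_commute)

lemma power2_norm_add:
  "(norm (x + y::'a::complex_inner))\<^sup>2 = (norm x)\<^sup>2 + (norm y)\<^sup>2 + 2 * Re (cinner x y)"
proof -
  have "Re (cinner (x + y) (x + y))
      = Re (cinner x x) + Re (cinner x y) + Re (cinner y x) + Re (cinner y y)"
    by (simp add: cinner_add_left cinner_add_right)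
  moreover have "Re (cinner y x) = Re (cinner x y)"
    by (subst cinner_commute) simp
  ultimately show ?thesis
    by (simp add: Re_cinner_self)
qed

lemma power2_norm_diff:
  "(norm (x - y::'a::complex_inner))\<^sup>2 = (norm x)\<^sup>2 + (norm y)\<^sup>2 - 2 * Re (cinner x y)"
  using power2_norm_add[of x "-y"] by (simp add: cinner_minus_right)

lemma norm_scaleC: "norm (scaleC c (x::'a::complex_inner)) = cmod c * norm x"
proof -
  have "(norm (scaleC c x))\<^sup>2 = Re (cnj c * c * cinner x x)"
    using cinner_scaleC_left[of c x "scaleC c x"] cinner_scaleC_right[of x c x]
    by (simp only: Re_cinner_self[symmetric] mult.assoc)
  also have "\<dots> = (cmod c)\<^sup>2 * (norm x)\<^sup>2"
    using cmod_power2[of c]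
    by (simp add: cinner_norm algebra_simps power2_eq_square)
  finally have "(norm (scaleC c x))\<^sup>2 = (cmod c * norm x)\<^sup>2"
    by (simp add: power_mult_distrib)
  then show ?thesis
    by (simp add: power2_eq_iff_nonneg)
qed

lemma Re_cinner_scaleR_right:
  "Re (cinner x (scaleR r (y::'a::complex_inner))) = r * Re (cinner x y)"
  by (simp add: scaleC_of_real[symmetric] cinner_scaleC_right)

lemma Re_cinner_scaleR_left:
  "Re (cinner (scaleR r x) (y::'a::complex_inner)) = r * Re (cinner x y)"
  by (simp add: scaleC_of_real[symmetric] cinner_scaleC_left)

lemma Re_cinner_le: "Re (cinner x (y::'a::complex_inner)) \<le> norm x * norm y"
proof (cases "x = 0 \<or> y = 0")
  case True
  then show ?thesis by auto
next
  case False
  then have nx: "norm x > 0" and ny: "norm y > 0" by auto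
  define a where "a = scaleR (1 / norm x) x"
  define b where "b = scaleR (1 / norm y) y"
  have "norm a = 1" "norm b = 1"
    using nx ny by (simp_all add: a_def b_def)
  then have "Re (cinner a b) \<le> 1"
    using power2_norm_diff[of a b] zero_le_power2[of "norm (a - b)"] by simp
  moreover have "Re (cinner a b) = (1 / norm x) * (1 / norm y) * Re (cinner x y)"
    by (simp add: a_def b_def Re_cinner_scaleR_left Re_cinner_scaleR_right)
  ultimately show ?thesis
    using nx ny by (simp add: divide_le_eq)
qed

lemma norm_cinner_le: "cmod (cinner x (y::'a::complex_inner)) \<le> norm x * norm y"
proof (cases "cinner x y = 0")
  case True
  then show ?thesis by simp
next
  case False
  define w where "w = cinner x y"
  define u where "u = cnj w / complex_of_real (cmod w)"
  have "cmod u = 1"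
    using False by (simp add: u_def w_def norm_divide)
  have "cinner x (scaleC u y) = complex_of_real (cmod w)"
    using False
    by (simp add: cinner_scaleC_right u_def w_def complex_norm_square[symmetric]
        power2_eq_square field_simps)
  then have "cmod w = Re (cinner x (scaleC u y))" by simp
  also have "\<dots> \<le> norm x * norm (scaleC u y)" by (rule Re_cinner_le)
  also have "\<dots> = norm x * norm y" by (simp add: norm_scaleC \<open>cmod u = 1\<close>)
  finally show ?thesis by (simp add: w_def)
qed

lemma bounded_linear_cinner_right: "bounded_linear (\<lambda>y::'a::complex_inner. cinner x y)"
proof (rule bounded_linear_intro[where K = "norm x"])
  show "cinner x (y + z) = cinner x y + cinner x z" for y z
    by (rule cinner_add_right)
  show "cinner x (scaleR r y) = scaleR r (cinner x y)" for r y
    by (simp add: scaleC_of_real[symmetric] cinner_scaleC_right scaleR_conv_of_real)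
  show "norm (cinner x y) \<le> norm y * norm x" for y
    using norm_cinner_le[of x y] by (simp add: mult.commute)
qed

lemma bounded_linear_scaleC: "bounded_linear (\<lambda>x::'a::complex_inner. scaleC c x)"
proof (rule bounded_linear_intro[where K = "cmod c"])
  show "scaleC c (x + y) = scaleC c x + scaleC c y" for x y
    by (rule scaleC_add_right)
  show "scaleC c (scaleR r x) = scaleR r (scaleC c x)" for r x
    by (metis scaleC_of_real scaleC_scaleC mult.commute)
  show "norm (scaleC c x) \<le> norm x * cmod c" for x
    by (simp add: norm_scaleC mult.commute)
qed

section \<open>Closed subspaces and orthogonal projection\<close>

lemma csubspace_zero: "csubspace M \<Longrightarrow> 0 \<in> M"
  unfolding csubspace_def by blast

lemma csubspace_add: "csubspace M \<Longrightarrow> x \<in> M \<Longrightarrow> y \<in> M \<Longrightarrow> x + y \<in> M"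
  unfolding csubspace_def by blast

lemma csubspace_scaleC: "csubspace M \<Longrightarrow> x \<in> M \<Longrightarrow> scaleC c x \<in> M"
  unfolding csubspace_def by blast

lemma csubspace_scaleR: "csubspace M \<Longrightarrow> x \<in> M \<Longrightarrow> scaleR r x \<in> M"
  by (metis csubspace_scaleC scaleC_of_real)

lemma csubspace_closed: "csubspace M \<Longrightarrow> closed M"
  unfolding csubspace_def by blast

lemma csubspace_sum: "csubspace M \<Longrightarrow> (\<And>v. v \<in> F \<Longrightarrow> f v \<in> M) \<Longrightarrow> sum f F \<in> M"
  by (induction F rule: infinite_finite_induct) (auto simp: csubspace_zero csubspace_add)

lemma real_eq_zero_if_linear_le_quadratic:
  fixes r M :: real
  assumes M: "M \<ge> 0" and le: "\<And>t. 2 * t * r \<le> t\<^sup>2 * M"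
  shows "r = 0"
proof -
  define t where "t = r / (M + 1)"
  have r: "r = (M + 1) * t"
    using M by (simp add: t_def)
  have "2 * t * ((M + 1) * t) \<le> t\<^sup>2 * M"
    using le[of t] by (simp add: r)
  then have "t\<^sup>2 * (M + 2) \<le> 0"
    by (simp add: power2_eq_square algebra_simps)
  then have "t = 0"
    using M by (smt (verit) mult_pos_pos zero_less_power2)
  then show ?thesis
    by (simp add: r)
qed

lemma exists_orthogonal_projection:
  fixes M :: "'a::{complex_inner,complete_space} set"
  assumes M: "csubspace M"
  shows "\<exists>p\<in>M. \<forall>m\<in>M. cinner m (y - p) = 0"
proof -
  define D where "D = (\<lambda>m. (norm (y - m))\<^sup>2) ` M"
  define d where "d = Inf D"
  have bdd: "bdd_below D"
    unfolding D_def by (rule bdd_belowI[of _ 0]) auto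
  have Dne: "D \<noteq> {}"
    using csubspace_zero[OF M] by (auto simp: D_def)
  have d_le: "d \<le> (norm (y - m))\<^sup>2" if "m \<in> M" for m
    unfolding d_def by (rule cInf_lower) (use that bdd in \<open>auto simp: D_def\<close>)
  have "\<exists>m\<in>M. (norm (y - m))\<^sup>2 < d + inverse (real (Suc N))" for N
  proof -
    obtain x where "x \<in> D" "x < d + inverse (real (Suc N))"
      using cInf_lessD[OF Dne, of "d + inverse (real (Suc N))"] by (auto simp: d_def)
    then show ?thesis by (auto simp: D_def)
  qed
  then obtain f where fM: "\<And>N. f N \<in> M"
    and f_less: "\<And>N. (norm (y - f N))\<^sup>2 < d + inverse (real (Suc N))"
    by metis
  have f_close: "(norm (f p - f q))\<^sup>2 \<le> 2 * inverse (real (Suc p)) + 2 * inverse (real (Suc q))"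
    for p q
  proof -
    define a where "a = y - f p"
    define b where "b = y - f q"
    have parallelogram: "(norm (a - b))\<^sup>2 + (norm (a + b))\<^sup>2 = 2 * (norm a)\<^sup>2 + 2 * (norm b)\<^sup>2"
      using power2_norm_add[of a b] power2_norm_diff[of a b] by simp
    define mid where "mid = scaleR (1/2) (f p + f q)"
    have "mid \<in> M"
      unfolding mid_def by (intro csubspace_scaleR[OF M] csubspace_add[OF M] fM)
    moreover have "a + b = scaleR 2 (y - mid)"
      by (simp add: a_def b_def mid_def algebra_simps scaleR_2)
    ultimately have "(norm (a + b))\<^sup>2 \<ge> 4 * d"
      using d_le by (simp add: power2_eq_square)
    moreover have "norm (a - b) = norm (f p - f q)"
      by (simp add: a_def b_def norm_minus_commute)
    ultimately show ?thesis
      using parallelogram f_less[of p] f_less[of q] by (simp add: a_def b_def)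
  qed
  have "Cauchy f"
  proof (rule metric_CauchyI)
    fix e :: real
    assume e: "e > 0"
    obtain N where N: "inverse (real (Suc N)) < e\<^sup>2 / 4"
      using reals_Archimedean[of "e\<^sup>2 / 4"] e by auto
    have "dist (f p) (f q) < e" if "N \<le> p" "N \<le> q" for p q
    proof -
      have "inverse (real (Suc p)) \<le> inverse (real (Suc N))"
        "inverse (real (Suc q)) \<le> inverse (real (Suc N))"
        using that by (simp_all add: le_imp_inverse_le)
      then have "(norm (f p - f q))\<^sup>2 < e\<^sup>2"
        using f_close[of p q] N by linarith
      then have "(dist (f p) (f q))\<^sup>2 < e\<^sup>2"
        by (simp add: dist_norm)
      then show ?thesis
        using e by (simp add: power_less_imp_less_base)
    qed
    then show "\<exists>N. \<forall>m\<ge>N. \<forall>n\<ge>N. dist (f m) (f n) < e" by blast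
  qed
  then obtain p where fp: "f \<longlonglongrightarrow> p"
    using Cauchy_convergent_iff convergent_def by blast
  have pM: "p \<in> M"
    using closed_sequentially[OF csubspace_closed[OF M] fM fp] .
  have "(\<lambda>N. (norm (y - f N))\<^sup>2) \<longlonglongrightarrow> (norm (y - p))\<^sup>2"
    by (intro tendsto_intros fp)
  then have norm_p: "(norm (y - p))\<^sup>2 \<le> d"
    by (rule LIMSEQ_le[OF _ LIMSEQ_inverse_real_of_nat_add[of d]]) (use f_less less_imp_le in blast)
  define w where "w = y - p"
  have minimal: "(norm w)\<^sup>2 \<le> (norm (w - m))\<^sup>2" if "m \<in> M" for m
  proof -
    have "d \<le> (norm (y - (p + m)))\<^sup>2"
      using d_le csubspace_add[OF M pM that] by blast
    moreover have "y - (p + m) = w - m"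
      by (simp add: w_def)
    ultimately have "d \<le> (norm (w - m))\<^sup>2"
      by simp
    then show ?thesis
      using norm_p unfolding w_def by linarith
  qed
  have Re_zero: "Re (cinner w m) = 0" if "m \<in> M" for m
  proof (rule real_eq_zero_if_linear_le_quadratic[where M = "(norm m)\<^sup>2"])
    show "2 * t * Re (cinner w m) \<le> t\<^sup>2 * (norm m)\<^sup>2" for t
      using minimal[OF csubspace_scaleR[OF M that, of t]]
      by (simp add: power2_norm_diff Re_cinner_scaleR_right power_mult_distrib)
  qed simp
  have "cinner m w = 0" if "m \<in> M" for m
  proof -
    have "Im (cinner w m) = 0"
      using Re_zero[OF csubspace_scaleC[OF M that, of \<i>]] by (simp add: cinner_scaleC_right)
    then have "cinner w m = 0"
      using Re_zero[OF that] by (simp add: complex_eq_iff)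
    then show ?thesis
      by (simp add: cinner_eq_zero_sym)
  qed
  then show ?thesis
    using pM w_def by blast
qed

lemma clinear_add: "clinear f \<Longrightarrow> f (x + y) = f x + f y"
  unfolding clinear_def by blast

lemma clinear_scaleC: "clinear f \<Longrightarrow> f (scaleC c x) = scaleC c (f x)"
  unfolding clinear_def by blast

lemma clinear_zero: "clinear f \<Longrightarrow> f 0 = 0"
  using clinear_add[of f 0 0] by simp

lemma clinear_diff: "clinear f \<Longrightarrow> f (x - y) = f x - f y"
  using clinear_add[of f x "-y"] clinear_scaleC[of f "-1" y] by (simp add: scaleC_minus_one)

lemma clinear_scaleR: "clinear f \<Longrightarrow> f (scaleR r x) = scaleR r (f x)"
  using clinear_scaleC[of f "complex_of_real r" x] by (simp add: scaleC_of_real)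

lemma clinear_sum: "clinear f \<Longrightarrow> f (sum g F) = (\<Sum>v\<in>F. f (g v))"
  by (induction F rule: infinite_finite_induct) (auto simp: clinear_zero clinear_add)

lemma clinear_funpow: "clinear (f::'a::complex_inner \<Rightarrow> 'a) \<Longrightarrow> clinear (f ^^ k)"
  by (induction k) (simp_all add: clinear_def)

lemma isometry_clinear: "isometry V \<Longrightarrow> clinear V"
  unfolding isometry_def by blast

lemma isometry_norm: "isometry V \<Longrightarrow> norm (V x) = norm x"
  unfolding isometry_def by blast

lemma isometry_cinner:
  assumes V: "isometry V"
  shows "cinner (V x) (V y) = cinner x y"
proof -
  note lin = isometry_clinear[OF V]
  have Re_eq: "Re (cinner (V a) (V b)) = Re (cinner a b)" for a b
    using power2_norm_add[of "V a" "V b"] power2_norm_add[of a b]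
      isometry_norm[OF V, of "a + b"] isometry_norm[OF V, of a] isometry_norm[OF V, of b]
    by (simp add: clinear_add[OF lin])
  have "Im (cinner (V x) (V y)) = Im (cinner x y)"
    using Re_eq[of x "scaleC (-\<i>) y"] by (simp add: clinear_scaleC[OF lin] cinner_scaleC_right)
  then show ?thesis
    using Re_eq[of x y] by (simp add: complex_eq_iff)
qed

lemma isometry_bounded_linear: "isometry V \<Longrightarrow> bounded_linear V"
  by (rule bounded_linear_intro[where K = 1])
    (auto simp: clinear_add clinear_scaleR isometry_clinear isometry_norm)

lemma closed_range_isometry:
  fixes V :: "'a::{complex_inner,complete_space} \<Rightarrow> 'a"
  assumes V: "isometry V"
  shows "closed (range V)"
proof (unfold closed_sequential_limits, intro allI impI, elim conjE)
  fix x l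
  assume "\<forall>n. x n \<in> range V" and xl: "x \<longlonglongrightarrow> l"
  then have "\<forall>n. \<exists>w. x n = V w"
    by blast
  then obtain u where u: "\<And>n. x n = V (u n)"
    by metis
  have dist_u: "dist (u m) (u n) = dist (x m) (x n)" for m n
    by (simp add: dist_norm u clinear_diff[OF isometry_clinear[OF V], symmetric]
        isometry_norm[OF V])
  have "Cauchy u"
  proof (rule metric_CauchyI)
    fix e :: real
    assume "e > 0"
    then obtain N where "\<forall>m\<ge>N. \<forall>n\<ge>N. dist (x m) (x n) < e"
      using LIMSEQ_imp_Cauchy[OF xl] metric_CauchyD by blast
    then show "\<exists>N. \<forall>m\<ge>N. \<forall>n\<ge>N. dist (u m) (u n) < e"
      by (auto simp: dist_u)
  qed
  then obtain w where "u \<longlonglongrightarrow> w"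
    using Cauchy_convergent_iff convergent_def by blast
  then have "(\<lambda>n. V (u n)) \<longlonglongrightarrow> V w"
    by (rule bounded_linear.tendsto[OF isometry_bounded_linear[OF V]])
  moreover have "x = (\<lambda>n. V (u n))"
    using u by auto
  ultimately show "l \<in> range V"
    using xl LIMSEQ_unique by auto
qed

lemma csubspace_range_isometry:
  fixes V :: "'a::{complex_inner,complete_space} \<Rightarrow> 'a"
  assumes V: "isometry V"
  shows "csubspace (range V)"
proof -
  note lin = isometry_clinear[OF V]
  have "V a + V b = V (a + b)" "scaleC c (V a) = V (scaleC c a)" for a b c
    by (simp_all add: clinear_add[OF lin] clinear_scaleC[OF lin])
  then show ?thesis
    unfolding csubspace_def using closed_range_isometry[OF V] clinear_zero[OF lin]
    by (auto intro!: range_eqI)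
qed

text \<open>The adjoint is a definite description; for an isometry it exists because the
  orthogonal projection of y onto the closed subspace range V is of the form V w, and then
  w represents the functional x \<mapsto> cinner (V x) y.\<close>

lemma cinner_adj_right:
  fixes V :: "'a::{complex_inner,complete_space} \<Rightarrow> 'a"
  assumes V: "isometry V"
  shows "cinner (V x) y = cinner x (adj V y)"
proof -
  have "\<exists>w. \<forall>x. cinner (V x) y = cinner x w" for y
  proof -
    obtain p where "p \<in> range V" and p: "\<forall>m\<in>range V. cinner m (y - p) = 0"
      using exists_orthogonal_projection[OF csubspace_range_isometry[OF V]] by blast
    then obtain w where "p = V w"
      by blast
    have "cinner (V x) y = cinner x w" for x
      using p[rule_format, of "V x"] by (simp add: cinner_diff_right \<open>p = V w\<close> isometry_cinner[OF V])
    then show ?thesis by blast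
  qed
  then obtain S where S: "\<forall>y x. cinner (V x) y = cinner x (S y)"
    by metis
  have unique: "\<exists>!S. \<forall>x y. cinner (V x) y = cinner x (S y)"
  proof
    show "\<forall>x y. cinner (V x) y = cinner x (S y)"
      using S by blast
    show "S' = S" if S': "\<forall>x y. cinner (V x) y = cinner x (S' y)" for S'
    proof
      show "S' y = S y" for y
        by (rule cinner_ext) (use S S' in metis)
    qed
  qed
  show ?thesis
    unfolding adj_def using theI'[OF unique] by blast
qed

lemma cinner_adj_left:
  fixes V :: "'a::{complex_inner,complete_space} \<Rightarrow> 'a"
  assumes V: "isometry V"
  shows "cinner y (V x) = cinner (adj V y) x"
  using cinner_adj_right[OF V, of x y] cinner_commute[of y "V x"] cinner_commute[of "adj V y" x]
  by simp

lemma clinear_adj: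
  fixes V :: "'a::{complex_inner,complete_space} \<Rightarrow> 'a"
  assumes V: "isometry V"
  shows "clinear (adj V)"
  unfolding clinear_def
proof (intro conjI allI)
  show "adj V (x + y) = adj V x + adj V y" for x y
    by (rule cinner_ext) (simp add: cinner_adj_right[OF V, symmetric] cinner_add_right)
  show "adj V (scaleC c x) = scaleC c (adj V x)" for c x
    by (rule cinner_ext) (simp add: cinner_adj_right[OF V, symmetric] cinner_scaleC_right)
qed

lemma adj_isometry_cancel:
  fixes V :: "'a::{complex_inner,complete_space} \<Rightarrow> 'a"
  assumes V: "isometry V"
  shows "adj V (V x) = x"
  by (rule cinner_ext[symmetric]) (simp add: cinner_adj_right[OF V, symmetric] isometry_cinner[OF V])

lemma norm_adj_isometry_le:
  fixes V :: "'a::{complex_inner,complete_space} \<Rightarrow> 'a"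
  assumes V: "isometry V"
  shows "norm (adj V y) \<le> norm y"
proof -
  have "(norm (adj V y))\<^sup>2 = Re (cinner y (V (adj V y)))"
    by (simp add: cinner_adj_left[OF V] Re_cinner_self)
  also have "\<dots> \<le> norm y * norm (adj V y)"
    using Re_cinner_le[of y "V (adj V y)"] by (simp add: isometry_norm[OF V])
  finally show ?thesis
    by (cases "norm (adj V y) = 0") (auto simp: power2_eq_square mult_le_cancel_right)
qed

lemma bounded_linear_adj:
  fixes V :: "'a::{complex_inner,complete_space} \<Rightarrow> 'a"
  assumes V: "isometry V"
  shows "bounded_linear (adj V)"
  by (rule bounded_linear_intro[where K = 1])
    (auto simp: clinear_add clinear_scaleR clinear_adj[OF V] norm_adj_isometry_le[OF V])

lemma isometry_adj_inverse_if_norm_eq: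
  fixes V :: "'a::{complex_inner,complete_space} \<Rightarrow> 'a"
  assumes V: "isometry V" and eq: "norm (adj V y) = norm y"
  shows "V (adj V y) = y"
proof -
  have "(norm (y - V (adj V y)))\<^sup>2 = (norm y)\<^sup>2 + (norm (adj V y))\<^sup>2 - 2 * (norm (adj V y))\<^sup>2"
    by (simp add: power2_norm_diff isometry_norm[OF V] cinner_adj_left[OF V] Re_cinner_self)
  then show ?thesis
    using eq by simp
qed

lemma csubspace_orthogonal: "csubspace {w::'a::complex_inner. cinner u w = 0}"
  unfolding csubspace_def
  using closed_Collect_eq[OF linear_continuous_on[OF bounded_linear_cinner_right[of u]] continuous_on_const]
  by (simp add: cinner_add_right cinner_scaleC_right)

lemma cspan_subset_csubspace:
  assumes M: "csubspace M" and "X \<subseteq> M"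
  shows "cspan X \<subseteq> M"
proof
  fix x
  assume "x \<in> cspan X"
  then obtain F c where "F \<subseteq> X" "x = (\<Sum>v\<in>F. scaleC (c v) v)"
    unfolding cspan_def by blast
  then show "x \<in> M"
    using \<open>X \<subseteq> M\<close> by (auto intro!: csubspace_sum[OF M] csubspace_scaleC[OF M])
qed

lemma ccspan_least: "csubspace M \<Longrightarrow> X \<subseteq> M \<Longrightarrow> ccspan X \<subseteq> M"
  unfolding ccspan_def by (intro closure_minimal cspan_subset_csubspace csubspace_closed)

lemma cspan_zero: "0 \<in> cspan X"
proof -
  have "finite {} \<and> {} \<subseteq> X \<and> 0 = (\<Sum>v\<in>{}. scaleC 0 v)"
    by simp
  then show ?thesis
    unfolding cspan_def mem_Collect_eq by (intro exI)
qed

lemma cspan_superset: "X \<subseteq> cspan (X::'a::complex_inner set)"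
proof
  fix x
  assume "x \<in> X"
  then have "finite {x} \<and> {x} \<subseteq> X \<and> x = (\<Sum>v\<in>{x}. scaleC 1 v)"
    by (simp add: scaleC_one)
  then show "x \<in> cspan X"
    unfolding cspan_def mem_Collect_eq by (intro exI)
qed

lemma cspan_add:
  assumes "x \<in> cspan X" "y \<in> cspan X"
  shows "x + y \<in> cspan (X::'a::complex_inner set)"
proof -
  obtain F c where F: "finite F" "F \<subseteq> X" "x = (\<Sum>v\<in>F. scaleC (c v) v)"
    using assms(1) unfolding cspan_def by blast
  obtain G d where G: "finite G" "G \<subseteq> X" "y = (\<Sum>v\<in>G. scaleC (d v) v)"
    using assms(2) unfolding cspan_def by blast
  define e where "e v = (if v \<in> F then c v else 0) + (if v \<in> G then d v else 0)" for v
  have "(\<Sum>v\<in>F \<union> G. scaleC (e v) v)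
      = (\<Sum>v\<in>F \<union> G. if v \<in> F then scaleC (c v) v else 0)
      + (\<Sum>v\<in>F \<union> G. if v \<in> G then scaleC (d v) v else 0)"
  proof -
    have "scaleC (e v) v = (if v \<in> F then scaleC (c v) v else 0) + (if v \<in> G then scaleC (d v) v else 0)"
      for v
      by (simp add: e_def scaleC_add_left)
    then show ?thesis
      by (simp add: sum.distrib)
  qed
  also have "\<dots> = x + y"
    using F G by (simp add: sum.inter_restrict[symmetric] Int_absorb1)
  finally have "finite (F \<union> G) \<and> F \<union> G \<subseteq> X \<and> x + y = (\<Sum>v\<in>F \<union> G. scaleC (e v) v)"
    using F G by simp
  then show ?thesis
    unfolding cspan_def mem_Collect_eq by (intro exI)
qed

lemma cspan_scaleC:
  assumes "x \<in> cspan X"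
  shows "scaleC a x \<in> cspan (X::'a::complex_inner set)"
proof -
  obtain F c where F: "finite F" "F \<subseteq> X" "x = (\<Sum>v\<in>F. scaleC (c v) v)"
    using assms unfolding cspan_def by blast
  then have "finite F \<and> F \<subseteq> X \<and> scaleC a x = (\<Sum>v\<in>F. scaleC (a * c v) v)"
    by (simp add: scaleC_sum scaleC_scaleC)
  then show ?thesis
    unfolding cspan_def mem_Collect_eq by (intro exI)
qed

lemma csubspace_closure:
  fixes S :: "'a::complex_inner set"
  assumes zero: "0 \<in> S" and add: "\<And>x y. x \<in> S \<Longrightarrow> y \<in> S \<Longrightarrow> x + y \<in> S"
    and scale: "\<And>c x. x \<in> S \<Longrightarrow> scaleC c x \<in> S"
  shows "csubspace (closure S)"
  unfolding csubspace_def
proof (intro conjI ballI allI)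
  show "0 \<in> closure S"
    using zero closure_subset by blast
  show "x + y \<in> closure S" if xy: "x \<in> closure S" "y \<in> closure S" for x y
  proof -
    obtain f where "\<forall>n. f n \<in> S" "f \<longlonglongrightarrow> x"
      using xy(1) unfolding closure_sequential by blast
    moreover obtain g where "\<forall>n. g n \<in> S" "g \<longlonglongrightarrow> y"
      using xy(2) unfolding closure_sequential by blast
    ultimately have "(\<forall>n. f n + g n \<in> S) \<and> (\<lambda>n. f n + g n) \<longlonglongrightarrow> x + y"
      using add by (auto intro: tendsto_intros)
    then show ?thesis
      by (rule iffD2[OF closure_sequential, OF exI])
  qed
  show "scaleC c x \<in> closure S" if x: "x \<in> closure S" for c x
  proof -
    obtain f where "\<forall>n. f n \<in> S" "f \<longlonglongrightarrow> x"
      using x unfolding closure_sequential by blast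
    moreover have "(\<lambda>n. scaleC c (f n)) \<longlonglongrightarrow> scaleC c x"
      by (rule bounded_linear.tendsto[OF bounded_linear_scaleC \<open>f \<longlonglongrightarrow> x\<close>])
    ultimately have "(\<forall>n. scaleC c (f n) \<in> S) \<and> (\<lambda>n. scaleC c (f n)) \<longlonglongrightarrow> scaleC c x"
      using scale by simp
    then show ?thesis
      by (rule iffD2[OF closure_sequential, OF exI])
  qed
qed simp

lemma csubspace_ccspan: "csubspace (ccspan (X::'a::complex_inner set))"
  unfolding ccspan_def by (rule csubspace_closure) (auto intro: cspan_zero cspan_add cspan_scaleC)

lemma ccspan_superset: "X \<subseteq> ccspan (X::'a::complex_inner set)"
  unfolding ccspan_def using cspan_superset closure_subset by blast

lemma image_ccspan_subset:
  fixes T :: "'a::complex_inner \<Rightarrow> 'a"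
  assumes bl: "bounded_linear T" and lin: "clinear T" and TS: "T ` S \<subseteq> ccspan S"
  shows "T ` ccspan S \<subseteq> ccspan S"
proof -
  have "T ` cspan S \<subseteq> ccspan S"
  proof clarify
    fix x
    assume "x \<in> cspan S"
    then obtain F c where F: "F \<subseteq> S" "x = (\<Sum>v\<in>F. scaleC (c v) v)"
      unfolding cspan_def by blast
    then have "T x = (\<Sum>v\<in>F. scaleC (c v) (T v))"
      by (simp add: clinear_sum[OF lin] clinear_scaleC[OF lin])
    also have "\<dots> \<in> ccspan S"
      using F(1) TS by (intro csubspace_sum csubspace_scaleC csubspace_ccspan) auto
    finally show "T x \<in> ccspan S" .
  qed
  then have "closure (T ` cspan S) \<subseteq> ccspan S"
    by (simp add: closure_minimal csubspace_closed[OF csubspace_ccspan])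
  then show ?thesis
    using closure_bounded_linear_image_subset[OF bl, of "cspan S"] unfolding ccspan_def by blast
qed

text \<open>A combination of generators splits into a part in L and a part orthogonal to both L and
  y; dropping the latter brings it closer to y, so y is a limit of points of L.\<close>

lemma mem_csubspace_if_orthogonal_to_other_generators:
  fixes L :: "'a::complex_inner set"
  assumes L: "csubspace L" and y: "y \<in> ccspan U"
    and orth: "\<And>v. v \<in> U \<Longrightarrow> v \<notin> L \<Longrightarrow> (\<forall>a\<in>L. cinner a v = 0) \<and> cinner y v = 0"
  shows "y \<in> L"
proof -
  have closer: "\<exists>a\<in>L. norm (y - a) \<le> norm (y - s)" if s: "s \<in> cspan U" for s
  proof -
    obtain F c where F: "finite F" "F \<subseteq> U" "s = (\<Sum>v\<in>F. scaleC (c v) v)"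
      using s unfolding cspan_def by blast
    define a where "a = (\<Sum>v\<in>F \<inter> L. scaleC (c v) v)"
    define b where "b = (\<Sum>v\<in>F - L. scaleC (c v) v)"
    have s_eq: "s = a + b"
      unfolding a_def b_def F(3) using F(1) by (metis sum.Int_Diff)
    have aL: "a \<in> L"
      unfolding a_def by (rule csubspace_sum[OF L]) (simp add: csubspace_scaleC[OF L])
    have orth_b: "cinner a v = 0 \<and> cinner y v = 0" if "v \<in> F - L" for v
      using that F(2) orth aL by blast
    have "cinner a b = 0" "cinner y b = 0"
      unfolding b_def cinner_sum_right using orth_b
      by (simp_all add: cinner_scaleC_right)
    then have inner_b: "cinner (y - s) b = - cinner b b"
      by (simp add: s_eq cinner_diff_left cinner_add_left)
    have "y - a = (y - s) + b"
      by (simp add: s_eq)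
    then have "(norm (y - a))\<^sup>2 = (norm (y - s))\<^sup>2 + (norm b)\<^sup>2 + 2 * Re (cinner (y - s) b)"
      by (simp only: power2_norm_add)
    also have "\<dots> = (norm (y - s))\<^sup>2 - (norm b)\<^sup>2"
      by (simp add: inner_b Re_cinner_self)
    finally have "(norm (y - a))\<^sup>2 \<le> (norm (y - s))\<^sup>2"
      by simp
    then have "norm (y - a) \<le> norm (y - s)"
      by (rule power2_le_imp_le) simp
    with aL show ?thesis by blast
  qed
  obtain s where s: "\<forall>n. s n \<in> cspan U" "s \<longlonglongrightarrow> y"
    using y unfolding ccspan_def closure_sequential by blast
  have "\<forall>n. \<exists>a. a \<in> L \<and> norm (y - a) \<le> norm (y - s n)"
    using closer s(1) by blast
  then obtain a where aL: "\<And>n. a n \<in> L" and a_closer: "\<And>n. norm (y - a n) \<le> norm (y - s n)"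
    by (metis choice)
  have "(\<lambda>n. norm (s n - y)) \<longlonglongrightarrow> 0"
    using s(2) by (simp add: LIM_zero tendsto_norm_zero)
  then have "(\<lambda>n. a n - y) \<longlonglongrightarrow> 0"
    by (rule Lim_null_comparison[rotated]) (use a_closer in \<open>simp add: norm_minus_commute\<close>)
  then have "a \<longlonglongrightarrow> y"
    by (simp add: LIM_zero_cancel)
  then show ?thesis
    using aL closed_sequentially csubspace_closed[OF L] by blast
qed

section \<open>Ordered products of powers\<close>

definition pow_prod_list :: "(nat \<Rightarrow> 'a \<Rightarrow> 'a) \<Rightarrow> (nat \<Rightarrow> nat) \<Rightarrow> nat list \<Rightarrow> 'a \<Rightarrow> 'a" where
  "pow_prod_list W m xs = foldr (\<lambda>j acc. (W j ^^ m j) \<circ> acc) xs id"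

lemma prod_pow_eq_pow_prod_list: "prod_pow V m J = pow_prod_list V m (sorted_list_of_set J)"
  unfolding prod_pow_def pow_prod_list_def ..

lemma pow_prod_list_Nil [simp]: "pow_prod_list W m [] x = x"
  by (simp add: pow_prod_list_def)

lemma pow_prod_list_Cons [simp]:
  "pow_prod_list W m (j # xs) x = (W j ^^ m j) (pow_prod_list W m xs x)"
  by (simp add: pow_prod_list_def)

lemma pow_prod_list_cong: "(\<And>j. j \<in> set xs \<Longrightarrow> m j = m' j) \<Longrightarrow> pow_prod_list W m xs x = pow_prod_list W m' xs x"
  by (induction xs) auto

lemma pow_prod_list_zero: "(\<And>j. j \<in> set xs \<Longrightarrow> m j = 0) \<Longrightarrow> pow_prod_list W m xs x = x"
  by (induction xs) auto

lemma pow_prod_list_single: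
  assumes "distinct xs" "i \<in> set xs" "\<And>j. j \<in> set xs \<Longrightarrow> j \<noteq> i \<Longrightarrow> m j = 0"
  shows "pow_prod_list W m xs x = (W i ^^ m i) x"
  using assms
proof (induction xs)
  case (Cons j xs)
  show ?case
  proof (cases "j = i")
    case True
    then have "pow_prod_list W m xs x = x"
      using Cons.prems by (intro pow_prod_list_zero) auto
    then show ?thesis
      using True by simp
  next
    case False
    then show ?thesis
      using Cons by auto
  qed
qed simp

lemma funpow_qcommute_right:
  fixes T S :: "'a::complex_inner \<Rightarrow> 'a"
  assumes S: "clinear S" and TS: "\<And>x. T (S x) = scaleC c (S (T x))"
  shows "T ((S ^^ k) x) = scaleC (c ^ k) ((S ^^ k) (T x))"
proof (induction k)
  case (Suc k)
  have "T ((S ^^ Suc k) x) = scaleC c (S (T ((S ^^ k) x)))"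
    by (simp add: TS)
  also have "\<dots> = scaleC (c ^ Suc k) ((S ^^ Suc k) (T x))"
    by (simp add: Suc clinear_scaleC[OF S] scaleC_scaleC)
  finally show ?case .
qed (simp add: scaleC_one)

lemma funpow_qcommute_left:
  fixes T S :: "'a::complex_inner \<Rightarrow> 'a"
  assumes T: "clinear T" and TS: "\<And>x. T (S x) = scaleC c (S (T x))"
  shows "(T ^^ k) (S x) = scaleC (c ^ k) (S ((T ^^ k) x))"
proof (induction k)
  case (Suc k)
  have "(T ^^ Suc k) (S x) = scaleC (c ^ k) (T (S ((T ^^ k) x)))"
    by (simp add: Suc clinear_scaleC[OF T])
  also have "\<dots> = scaleC (c ^ Suc k) (S ((T ^^ Suc k) x))"
    by (simp add: TS scaleC_scaleC mult.commute)
  finally show ?case .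
qed (simp add: scaleC_one)

text \<open>The scalar collects the commutation constants of the factors that W i is moved past.\<close>

lemma pow_prod_list_Suc:
  fixes W :: "nat \<Rightarrow> 'a::complex_inner \<Rightarrow> 'a"
  assumes "distinct xs" and "i \<in> set xs"
    and lin: "\<And>j. j \<in> set xs \<Longrightarrow> clinear (W j)"
    and comm: "\<And>j x. j \<in> set xs \<Longrightarrow> j \<noteq> i \<Longrightarrow> W j (W i x) = scaleC (c j) (W i (W j x))"
    and nonzero: "\<And>j. j \<in> set xs \<Longrightarrow> j \<noteq> i \<Longrightarrow> c j \<noteq> 0"
  shows "\<exists>d. d \<noteq> 0 \<and>
    (\<forall>x. pow_prod_list W (m(i := Suc (m i))) xs x = scaleC d (W i (pow_prod_list W m xs x)))"
  using assms(1,2) lin comm nonzero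
proof (induction xs)
  case (Cons j xs)
  show ?case
  proof (cases "j = i")
    case True
    then have "pow_prod_list W (m(i := Suc (m i))) xs x = pow_prod_list W m xs x" for x
      using Cons.prems(1) by (intro pow_prod_list_cong) auto
    then have "\<forall>x. pow_prod_list W (m(i := Suc (m i))) (j # xs) x
        = scaleC 1 (W i (pow_prod_list W m (j # xs) x))"
      using True by (simp add: scaleC_one funpow_swap1)
    then show ?thesis
      using one_neq_zero by blast
  next
    case False
    have lin_j: "clinear (W j)" and comm_j: "\<And>x. W j (W i x) = scaleC (c j) (W i (W j x))"
      using Cons.prems False by auto
    have "\<exists>d. d \<noteq> 0 \<and>
      (\<forall>x. pow_prod_list W (m(i := Suc (m i))) xs x = scaleC d (W i (pow_prod_list W m xs x)))"
      by (rule Cons.IH) (use Cons.prems False in auto)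
    then obtain d where "d \<noteq> 0"
      and d: "\<And>x. pow_prod_list W (m(i := Suc (m i))) xs x = scaleC d (W i (pow_prod_list W m xs x))"
      by blast
    have "pow_prod_list W (m(i := Suc (m i))) (j # xs) x
        = scaleC (d * c j ^ m j) (W i (pow_prod_list W m (j # xs) x))" for x
      using False
      by (simp add: d clinear_scaleC[OF clinear_funpow[OF lin_j]]
          funpow_qcommute_left[where T = "W j" and S = "W i", OF lin_j comm_j] scaleC_scaleC)
    moreover have "d * c j ^ m j \<noteq> 0"
      using \<open>d \<noteq> 0\<close> Cons.prems(5) False by simp
    ultimately show ?thesis
      by blast
  qed
qed simp

lemma pow_prod_list_qcommute:
  fixes W :: "nat \<Rightarrow> 'a::complex_inner \<Rightarrow> 'a"
  assumes lin: "\<And>j. j \<in> set xs \<Longrightarrow> clinear (W j)"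
    and comm: "\<And>j x. j \<in> set xs \<Longrightarrow> T (W j x) = scaleC (c j) (W j (T x))"
  shows "\<exists>d. \<forall>x. T (pow_prod_list W m xs x) = scaleC d (pow_prod_list W m xs (T x))"
  using lin comm
proof (induction xs)
  case Nil
  show ?case
    by (intro exI[of _ 1]) (simp add: scaleC_one)
next
  case (Cons j xs)
  have lin_j: "clinear (W j)" and comm_j: "\<And>x. T (W j x) = scaleC (c j) (W j (T x))"
    using Cons.prems by auto
  have "\<exists>d. \<forall>x. T (pow_prod_list W m xs x) = scaleC d (pow_prod_list W m xs (T x))"
    by (rule Cons.IH) (use Cons.prems in auto)
  then obtain d where d: "\<And>x. T (pow_prod_list W m xs x) = scaleC d (pow_prod_list W m xs (T x))"
    by blast
  have "T (pow_prod_list W m (j # xs) x) = scaleC (c j ^ m j * d) (pow_prod_list W m (j # xs) (T x))"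
    for x
    by (simp add: funpow_qcommute_right[where T = T and S = "W j", OF lin_j comm_j] d scaleC_scaleC
        clinear_scaleC[OF clinear_funpow[OF lin_j]])
  then show ?case
    by blast
qed

lemma funpow_image_superset: "L \<subseteq> T ` L \<Longrightarrow> L \<subseteq> (T ^^ k) ` L"
proof (induction k)
  case (Suc k)
  then have "L \<subseteq> (T ^^ k) ` T ` L"
    by blast
  then show ?case
    by (simp add: image_comp funpow_swap1 comp_def)
qed simp

lemma pow_prod_list_image_superset:
  "(\<And>j. j \<in> set xs \<Longrightarrow> L \<subseteq> W j ` L) \<Longrightarrow> L \<subseteq> pow_prod_list W m xs ` L"
proof (induction xs)
  case (Cons j xs)
  then have "L \<subseteq> (W j ^^ m j) ` pow_prod_list W m xs ` L"
    using funpow_image_superset[of L "W j" "m j"] by (meson image_mono order_trans list.set_intros)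
  then show ?case
    by (simp add: image_comp comp_def)
qed simp

lemma prod_pow_zero: "finite J \<Longrightarrow> (\<And>j. j \<in> J \<Longrightarrow> m j = 0) \<Longrightarrow> prod_pow V m J x = x"
  unfolding prod_pow_eq_pow_prod_list by (rule pow_prod_list_zero) simp

lemma prod_pow_single:
  "finite J \<Longrightarrow> i \<in> J \<Longrightarrow> (\<And>j. j \<in> J \<Longrightarrow> j \<noteq> i \<Longrightarrow> m j = 0) \<Longrightarrow>
    prod_pow V m J x = (V i ^^ m i) x"
  unfolding prod_pow_eq_pow_prod_list by (rule pow_prod_list_single) auto

lemma prod_pow_image_superset:
  "finite J \<Longrightarrow> (\<And>j. j \<in> J \<Longrightarrow> L \<subseteq> V j ` L) \<Longrightarrow> L \<subseteq> prod_pow V m J ` L"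
  unfolding prod_pow_eq_pow_prod_list by (rule pow_prod_list_image_superset) simp

lemma kernel_adj_subset_H_iso: "kernel (adj S) \<subseteq> H_iso S"
proof -
  have "kernel (adj S) \<subseteq> (\<Union>k. (S ^^ k) ` kernel (adj S))"
    by (auto intro!: UN_I[of 0])
  then show ?thesis
    unfolding H_iso_def using ccspan_superset by blast
qed

lemma W_A_subset_kernels: "W_A n V A \<subseteq> (\<Inter>i\<in>A. kernel (adj (V i)))"
proof
  fix x
  assume "x \<in> W_A n V A"
  moreover have "(\<lambda>j\<in>{1..n} - A. 0::nat) \<in> ({1..n} - A) \<rightarrow>\<^sub>E UNIV"
    by simp
  ultimately obtain y where "y \<in> (\<Inter>i\<in>A. kernel (adj (V i)))"
    and "x = prod_pow V (\<lambda>j\<in>{1..n} - A. 0) ({1..n} - A) y"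
    unfolding W_A_def by blast
  moreover have "prod_pow V (\<lambda>j\<in>{1..n} - A. 0) ({1..n} - A) y = y"
    by (rule prod_pow_zero) auto
  ultimately show "x \<in> (\<Inter>i\<in>A. kernel (adj (V i)))"
    by simp
qed

lemma W_A_subset_H_uni:
  assumes j: "j \<in> {1..n} - A"
  shows "W_A n V A \<subseteq> H_uni (V j)"
  unfolding H_uni_def
proof (intro subsetI INT_I)
  fix x and k :: nat
  assume "x \<in> W_A n V A"
  moreover define m where "m = (\<lambda>j'\<in>{1..n} - A. if j' = j then k else 0)"
  moreover have "m \<in> ({1..n} - A) \<rightarrow>\<^sub>E UNIV"
    by (simp add: m_def)
  ultimately obtain y where "x = prod_pow V m ({1..n} - A) y"
    unfolding W_A_def by blast
  also have "\<dots> = (V j ^^ k) y"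
    using j by (subst prod_pow_single[of _ j]) (auto simp: m_def)
  finally show "x \<in> range (V j ^^ k)"
    by simp
qed

lemma W_A_subset_H_A: "W_A n V A \<subseteq> H_A n V A"
proof -
  have "W_A n V A \<subseteq> H_iso (V i)" if "i \<in> A" for i
    using W_A_subset_kernels kernel_adj_subset_H_iso that by fast
  moreover have "W_A n V A \<subseteq> H_uni (V j)" if "j \<in> {1..n} - A" for j
    using W_A_subset_H_uni[OF that] .
  ultimately show ?thesis
    unfolding H_A_def by (intro Int_greatest INT_greatest)
qed

section \<open>Doubly non-commuting isometries\<close>

locale doubly_noncommuting_tuple =
  fixes n :: nat and z :: "nat \<Rightarrow> nat \<Rightarrow> complex"
    and V :: "nat \<Rightarrow> 'a::{complex_inner,complete_space} \<Rightarrow> 'a"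
  assumes z_unimodular_conj: "\<forall>i\<in>{1..n}. \<forall>j\<in>{1..n}. i \<noteq> j \<longrightarrow> norm (z i j) = 1 \<and> z j i = cnj (z i j)"
    and doubly_noncommuting_V: "doubly_noncommuting n z V"
begin

lemma isometry_V: "i \<in> {1..n} \<Longrightarrow> isometry (V i)"
  using doubly_noncommuting_V unfolding doubly_noncommuting_def by blast

lemma clinear_V: "i \<in> {1..n} \<Longrightarrow> clinear (V i)"
  by (rule isometry_clinear[OF isometry_V])

lemma adj_V_commute:
  "i \<in> {1..n} \<Longrightarrow> j \<in> {1..n} \<Longrightarrow> i \<noteq> j \<Longrightarrow>
    adj (V i) (V j x) = scaleC (cnj (z i j)) (V j (adj (V i) x))"
  using doubly_noncommuting_V unfolding doubly_noncommuting_def by blast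

lemma norm_z: "i \<in> {1..n} \<Longrightarrow> j \<in> {1..n} \<Longrightarrow> i \<noteq> j \<Longrightarrow> cmod (z i j) = 1"
  using z_unimodular_conj by blast

lemma z_nonzero: "i \<in> {1..n} \<Longrightarrow> j \<in> {1..n} \<Longrightarrow> i \<noteq> j \<Longrightarrow> z i j \<noteq> 0"
  using norm_z by fastforce

lemma z_swap: "i \<in> {1..n} \<Longrightarrow> j \<in> {1..n} \<Longrightarrow> i \<noteq> j \<Longrightarrow> z j i = cnj (z i j)"
  using z_unimodular_conj by blast

text \<open>The adjoint of V j maps V i (V j x) isometrically onto z i j V i x, so V i (V j x)
  lies in the range of V j.\<close>

lemma V_commute:
  assumes i: "i \<in> {1..n}" and j: "j \<in> {1..n}" and ij: "i \<noteq> j"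
  shows "V i (V j x) = scaleC (z i j) (V j (V i x))"
proof -
  define y where "y = V i (V j x)"
  have adj_y: "adj (V j) y = scaleC (z i j) (V i x)"
    using adj_V_commute[OF j i, of "V j x"] ij
    by (simp add: y_def adj_isometry_cancel[OF isometry_V[OF j]] z_swap[OF i j ij])
  have "norm (adj (V j) y) = norm x"
    by (simp only: adj_y norm_scaleC norm_z[OF i j ij] isometry_norm[OF isometry_V[OF i]] mult_1)
  also have "\<dots> = norm y"
    by (simp add: y_def isometry_norm[OF isometry_V[OF i]] isometry_norm[OF isometry_V[OF j]])
  finally have "norm (adj (V j) y) = norm y" .
  then have "V j (adj (V j) y) = y"
    by (rule isometry_adj_inverse_if_norm_eq[OF isometry_V[OF j]])
  then have "V j (scaleC (z i j) (V i x)) = y"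
    by (simp only: adj_y)
  then show ?thesis
    by (simp add: y_def clinear_scaleC[OF clinear_V[OF j]])
qed

lemma adj_commute:
  assumes i: "i \<in> {1..n}" and j: "j \<in> {1..n}" and ij: "i \<noteq> j"
  shows "adj (V i) (adj (V j) w) = scaleC (z i j) (adj (V j) (adj (V i) w))"
proof (rule cinner_ext_left)
  fix u
  have "cinner (adj (V i) (adj (V j) w)) u = cinner w (V j (V i u))"
    by (simp add: cinner_adj_left[OF isometry_V[OF i], symmetric]
        cinner_adj_left[OF isometry_V[OF j], symmetric])
  also have "\<dots> = z j i * cinner (adj (V j) (adj (V i) w)) u"
    by (simp add: V_commute[OF j i ij[symmetric]] cinner_scaleC_right
        cinner_adj_left[OF isometry_V[OF i], symmetric] cinner_adj_left[OF isometry_V[OF j], symmetric])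
  also have "\<dots> = cinner (scaleC (z i j) (adj (V j) (adj (V i) w))) u"
    by (simp add: cinner_scaleC_left z_swap[OF i j ij])
  finally show "cinner (adj (V i) (adj (V j) w)) u = cinner (scaleC (z i j) (adj (V j) (adj (V i) w))) u" .
qed

lemma adj_funpow_V_commute:
  assumes i: "i \<in> {1..n}" and j: "j \<in> {1..n}" and ij: "i \<noteq> j"
  shows "adj (V j) ((V i ^^ k) x) = scaleC (cnj (z j i) ^ k) ((V i ^^ k) (adj (V j) x))"
  using ij by (intro funpow_qcommute_right[OF clinear_V[OF i]] adj_V_commute[OF j i]) auto

lemma adj_image_H_iso_subset:
  assumes i: "i \<in> {1..n}" and j: "j \<in> {1..n}"
  shows "adj (V j) ` H_iso (V i) \<subseteq> H_iso (V i)"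
  unfolding H_iso_def
proof (rule image_ccspan_subset[OF bounded_linear_adj clinear_adj, OF isometry_V[OF j] isometry_V[OF j]])
  let ?S = "\<Union>k. (V i ^^ k) ` kernel (adj (V i))"
  have gen: "(V i ^^ k) w \<in> ccspan ?S" if "w \<in> kernel (adj (V i))" for k w
  proof -
    have "(V i ^^ k) w \<in> ?S"
      by (rule UN_I[where a = k, OF UNIV_I], rule imageI[OF that])
    then show ?thesis
      by (rule subsetD[OF ccspan_superset])
  qed
  show "adj (V j) ` ?S \<subseteq> ccspan ?S"
  proof clarify
    fix k w
    assume w: "w \<in> kernel (adj (V i))"
    show "adj (V j) ((V i ^^ k) w) \<in> ccspan ?S"
    proof (cases "i = j")
      case True
      show ?thesis
      proof (cases k)
        case 0
        then show ?thesis
          using w True csubspace_zero[OF csubspace_ccspan] by (simp add: kernel_def)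
      next
        case (Suc k')
        then have "adj (V j) ((V i ^^ k) w) = (V i ^^ k') w"
          using True adj_isometry_cancel[OF isometry_V[OF i]] by simp
        then show ?thesis
          using gen[OF w] by simp
      qed
    next
      case False
      have "adj (V j) w \<in> kernel (adj (V i))"
        using adj_commute[OF i j False, of w] w
        by (simp add: kernel_def clinear_zero[OF clinear_adj[OF isometry_V[OF j]]])
      then have "scaleC (cnj (z j i) ^ k) ((V i ^^ k) (adj (V j) w)) \<in> ccspan ?S"
        by (intro csubspace_scaleC[OF csubspace_ccspan] gen)
      then show ?thesis
        by (simp add: adj_funpow_V_commute[OF i j False])
    qed
  qed
qed

lemma adj_image_H_uni_subset:
  assumes i: "i \<in> {1..n}" and j: "j \<in> {1..n}"
  shows "adj (V j) ` H_uni (V i) \<subseteq> H_uni (V i)"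
  unfolding H_uni_def
proof clarify
  fix x k
  assume x: "x \<in> (\<Inter>k. range (V i ^^ k))"
  show "adj (V j) x \<in> range (V i ^^ k)"
  proof (cases "i = j")
    case True
    obtain u where "x = (V i ^^ Suc k) u"
      using x by blast
    then show ?thesis
      using True by (simp add: adj_isometry_cancel[OF isometry_V[OF j]])
  next
    case False
    obtain u where "x = (V i ^^ k) u"
      using x by blast
    then have "adj (V j) x = (V i ^^ k) (scaleC (cnj (z j i) ^ k) (adj (V j) u))"
      by (simp add: adj_funpow_V_commute[OF i j False]
          clinear_scaleC[OF clinear_funpow[OF clinear_V[OF i]]])
    then show ?thesis
      by simp
  qed
qed

lemma adj_mem_H_A:
  assumes A: "A \<subseteq> {1..n}" and j: "j \<in> {1..n}" and x: "x \<in> H_A n V A"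
  shows "adj (V j) x \<in> H_A n V A"
  unfolding H_A_def
proof (intro IntI INT_I)
  fix i
  assume "i \<in> A"
  then show "adj (V j) x \<in> H_iso (V i)"
    using x A adj_image_H_iso_subset[OF _ j, of i] unfolding H_A_def by blast
next
  fix i
  assume "i \<in> {1..n} - A"
  then show "adj (V j) x \<in> H_uni (V i)"
    using x adj_image_H_uni_subset[OF _ j, of i] unfolding H_A_def by blast
qed

lemma prod_pow_Suc:
  assumes A: "A \<subseteq> {1..n}" and i: "i \<in> A"
  shows "\<exists>d. d \<noteq> 0 \<and> (\<forall>x. prod_pow V (k(i := Suc (k i))) A x = scaleC d (V i (prod_pow V k A x)))"
proof -
  have "finite A" and A_n: "\<And>j. j \<in> A \<Longrightarrow> j \<in> {1..n}"
    using A finite_subset by auto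
  then show ?thesis
    unfolding prod_pow_eq_pow_prod_list using i
    by (intro pow_prod_list_Suc[where c = "\<lambda>j. z j i"]) (auto intro: clinear_V V_commute simp: A_n z_nonzero)
qed

lemma V_prod_pow_qcommute:
  assumes A: "A \<subseteq> {1..n}" and j: "j \<in> {1..n} - A"
  shows "\<exists>d. \<forall>x. V j (prod_pow V k A x) = scaleC d (prod_pow V k A (V j x))"
proof -
  have "finite A" and A_n: "\<And>i. i \<in> A \<Longrightarrow> i \<in> {1..n}"
    using A finite_subset by auto
  then show ?thesis
    unfolding prod_pow_eq_pow_prod_list using j
    by (intro pow_prod_list_qcommute[where c = "\<lambda>i. z j i"]) (auto intro: clinear_V V_commute)
qed


end

section \<open>Generating wandering subspaces\<close>

locale generating_wandering_subspace = doubly_noncommuting_tuple +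
  fixes A :: "nat set" and L :: "'a::{complex_inner,complete_space} set"
  assumes A_subset: "A \<subseteq> {1..n}"
    and csubspace_L: "csubspace L"
    and L_subset_H_A: "L \<subseteq> H_A n V A"
    and V_image_L: "\<forall>j\<in>{1..n} - A. V j ` L \<subseteq> L"
    and orthogonal_pieces: "\<forall>k\<in>A \<rightarrow>\<^sub>E UNIV. \<forall>k'\<in>A \<rightarrow>\<^sub>E UNIV. k \<noteq> k' \<longrightarrow>
           orth_sets (prod_pow V k A ` L) (prod_pow V k' A ` L)"
    and H_A_eq_ccspan: "H_A n V A = ccspan (\<Union>k\<in>A \<rightarrow>\<^sub>E UNIV. prod_pow V k A ` L)"
begin

lemma finite_A: "finite A"
  using A_subset finite_subset by blast

lemma prod_pow_zero_exponents: "prod_pow V (\<lambda>i\<in>A. 0::nat) A x = x"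
  by (rule prod_pow_zero[OF finite_A]) simp

lemma cinner_prod_pow_L:
  assumes "k \<in> A \<rightarrow>\<^sub>E UNIV" "k \<noteq> (\<lambda>i\<in>A. 0::nat)" "l \<in> L" "x \<in> L"
  shows "cinner (prod_pow V k A l) x = 0"
proof -
  have "orth_sets (prod_pow V k A ` L) (prod_pow V (\<lambda>i\<in>A. 0::nat) A ` L)"
    using orthogonal_pieces assms(1,2) by simp
  moreover have "x \<in> prod_pow V (\<lambda>i\<in>A. 0::nat) A ` L"
    using assms(4) prod_pow_zero_exponents by (metis image_eqI)
  ultimately show ?thesis
    using assms(3) unfolding orth_sets_def by blast
qed

lemma mem_L_if_orthogonal_to_pieces:
  assumes y: "y \<in> H_A n V A"
    and orth: "\<And>k l. k \<in> A \<rightarrow>\<^sub>E UNIV \<Longrightarrow> k \<noteq> (\<lambda>i\<in>A. 0::nat) \<Longrightarrow> l \<in> L \<Longrightarrow>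
      cinner (prod_pow V k A l) y = 0"
  shows "y \<in> L"
proof (rule mem_csubspace_if_orthogonal_to_other_generators[OF csubspace_L])
  show "y \<in> ccspan (\<Union>k\<in>A \<rightarrow>\<^sub>E UNIV. prod_pow V k A ` L)"
    using y H_A_eq_ccspan by simp
  fix v
  assume "v \<in> (\<Union>k\<in>A \<rightarrow>\<^sub>E UNIV. prod_pow V k A ` L)" and "v \<notin> L"
  then obtain k l where k: "k \<in> A \<rightarrow>\<^sub>E UNIV" and l: "l \<in> L" and v: "v = prod_pow V k A l"
    by blast
  have "k \<noteq> (\<lambda>i\<in>A. 0::nat)"
    using \<open>v \<notin> L\<close> v l prod_pow_zero_exponents by auto
  then show "(\<forall>a\<in>L. cinner a v = 0) \<and> cinner y v = 0"
    using cinner_prod_pow_L[OF k _ l] orth[OF k _ l] v by (simp add: cinner_eq_zero_sym)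
qed

text \<open>For i in A and x in L, the vector u = adj (V i) x lies in H_A and is orthogonal to all of
  H_A, because V i maps each piece into the piece with the i-th exponent raised by one,
  which is orthogonal to L.\<close>

lemma L_subset_kernel:
  assumes x: "x \<in> L" and i: "i \<in> A"
  shows "adj (V i) x = 0"
proof -
  have i_n: "i \<in> {1..n}"
    using i A_subset by blast
  define u where "u = adj (V i) x"
  have "prod_pow V k A l \<in> {w. cinner u w = 0}" if k: "k \<in> A \<rightarrow>\<^sub>E UNIV" and l: "l \<in> L" for k l
  proof -
    obtain d where "d \<noteq> 0"
      and d: "prod_pow V (k(i := Suc (k i))) A l = scaleC d (V i (prod_pow V k A l))"
      using prod_pow_Suc[OF A_subset i, of k] by blast
    have "k(i := Suc (k i)) \<in> A \<rightarrow>\<^sub>E UNIV"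
      using k i by (auto simp: PiE_iff extensional_def)
    moreover have "k(i := Suc (k i)) \<noteq> (\<lambda>i\<in>A. 0::nat)"
      using i by (metis fun_upd_same nat.distinct(1) restrict_apply')
    ultimately have "cinner x (prod_pow V (k(i := Suc (k i))) A l) = 0"
      using cinner_prod_pow_L l x by (simp add: cinner_eq_zero_sym)
    then show ?thesis
      using \<open>d \<noteq> 0\<close> by (simp add: d cinner_scaleC_right u_def cinner_adj_left[OF isometry_V[OF i_n]])
  qed
  then have "H_A n V A \<subseteq> {w. cinner u w = 0}"
    unfolding H_A_eq_ccspan by (intro ccspan_least csubspace_orthogonal) blast
  moreover have "u \<in> H_A n V A"
    unfolding u_def using adj_mem_H_A[OF A_subset i_n] x L_subset_H_A by blast
  ultimately have "cinner u u = 0"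
    by blast
  then show ?thesis
    by (simp add: u_def cinner_self_eq_zero_iff)
qed

lemma adj_V_image_L:
  assumes j: "j \<in> {1..n} - A" and x: "x \<in> L"
  shows "adj (V j) x \<in> L"
proof (rule mem_L_if_orthogonal_to_pieces)
  have j_n: "j \<in> {1..n}"
    using j by blast
  show "adj (V j) x \<in> H_A n V A"
    using adj_mem_H_A[OF A_subset j_n] x L_subset_H_A by blast
  fix k l
  assume k: "k \<in> A \<rightarrow>\<^sub>E UNIV" "k \<noteq> (\<lambda>i\<in>A. 0::nat)" and l: "l \<in> L"
  obtain d where d: "\<And>y. V j (prod_pow V k A y) = scaleC d (prod_pow V k A (V j y))"
    using V_prod_pow_qcommute[OF A_subset j] by blast
  have "V j l \<in> L"
    using V_image_L j l by blast
  then show "cinner (prod_pow V k A l) (adj (V j) x) = 0"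
    using cinner_prod_pow_L[OF k _ x]
    by (simp add: cinner_adj_right[OF isometry_V[OF j_n], symmetric] d cinner_scaleC_left)
qed

lemma L_subset_V_image:
  assumes j: "j \<in> {1..n} - A"
  shows "L \<subseteq> V j ` L"
proof
  fix x
  assume x: "x \<in> L"
  have "x \<in> range (V j ^^ 1)"
    using x L_subset_H_A j unfolding H_A_def H_uni_def by blast
  then have "x = V j (adj (V j) x)"
    using adj_isometry_cancel[OF isometry_V] j by auto
  then show "x \<in> V j ` L"
    using adj_V_image_L[OF j x] by blast
qed

lemma L_subset_W_A: "L \<subseteq> W_A n V A"
  unfolding W_A_def
proof (intro subsetI INT_I)
  fix x m
  assume "x \<in> L"
  then obtain y where "y \<in> L" and "x = prod_pow V m ({1..n} - A) y"
    using prod_pow_image_superset[of "{1..n} - A" L V m] L_subset_V_image by blast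
  moreover have "y \<in> (\<Inter>i\<in>A. kernel (adj (V i)))"
    using L_subset_kernel \<open>y \<in> L\<close> by (simp add: kernel_def)
  ultimately show "x \<in> prod_pow V m ({1..n} - A) ` (\<Inter>i\<in>A. kernel (adj (V i)))"
    by blast
qed

lemma W_A_subset_L: "W_A n V A \<subseteq> L"
proof
  fix x
  assume "x \<in> W_A n V A"
  then have xH: "x \<in> H_A n V A" and xK: "x \<in> (\<Inter>i\<in>A. kernel (adj (V i)))"
    using W_A_subset_H_A W_A_subset_kernels by blast+
  show "x \<in> L"
  proof (rule mem_L_if_orthogonal_to_pieces[OF xH])
    fix k l
    assume k: "k \<in> A \<rightarrow>\<^sub>E UNIV" "k \<noteq> (\<lambda>i\<in>A. 0::nat)" and "l \<in> L"
    obtain i where i: "i \<in> A" "k i \<noteq> 0"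
      using k PiE_ext[OF k(1), of "\<lambda>i\<in>A. 0"] by auto
    define k' where "k' = k(i := k i - 1)"
    have "k'(i := Suc (k' i)) = k"
      using i by (auto simp: k'_def)
    then obtain d where d: "\<And>y. prod_pow V k A y = scaleC d (V i (prod_pow V k' A y))"
      using prod_pow_Suc[OF A_subset i(1), of k'] by metis
    have i_n: "i \<in> {1..n}"
      using i A_subset by blast
    show "cinner (prod_pow V k A l) x = 0"
      using xK i by (simp add: d cinner_scaleC_left cinner_adj_right[OF isometry_V[OF i_n]] kernel_def)
  qed
qed

end

theorem proposition3p9:
  fixes n :: nat and z :: "nat \<Rightarrow> nat \<Rightarrow> complex"
    and V :: "nat \<Rightarrow> 'a::{complex_inner, complete_space} \<Rightarrow> 'a"
    and A :: "nat set" and L :: "'a set"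
  assumes "n \<ge> 1"
    and "\<forall>i\<in>{1..n}. \<forall>j\<in>{1..n}. i \<noteq> j \<longrightarrow> norm (z i j) = 1 \<and> z j i = cnj (z i j)"
    and "doubly_noncommuting n z V"
    and "A \<subseteq> {1..n}" and "A \<noteq> {}"
    and "csubspace L" and "L \<subseteq> H_A n V A"
    and "\<forall>j\<in>{1..n} - A. V j ` L \<subseteq> L"
    and "\<forall>k\<in>A \<rightarrow>\<^sub>E (UNIV::nat set). \<forall>k'\<in>A \<rightarrow>\<^sub>E (UNIV::nat set). k \<noteq> k' \<longrightarrow>
           orth_sets (prod_pow V k A ` L) (prod_pow V k' A ` L)"
    and "H_A n V A = ccspan (\<Union>k\<in>A \<rightarrow>\<^sub>E (UNIV::nat set). prod_pow V k A ` L)"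
  shows "L = W_A n V A"
proof -
  interpret generating_wandering_subspace n z V A L
    using assms(2-4,6-10) by unfold_locales
  show ?thesis
    using L_subset_W_A W_A_subset_L by (rule equalityI)
qed

end
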